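(* Let $a\in\mathbb{R}$ and $w\in\mathbb{C}\setminus\mathbb{R}$ with $(a,w)\in D_c$, and suppose $\varphi := |\operatorname{Arg}(w)|\in(\pi/2,\pi)$. Then $\tau_c(a,w) > 1$ if and only if one of the following holds: (i) $a \ge 0$ and $|w| < R_2(-a;\varphi)$; (ii) $-M(\varphi) < a < 0$ and $R_1(-a;\varphi) < |w| < R_2(-a;\varphi)$.
   Context: $\operatorname{Arg}(w)\in(-\pi,\pi]$ is the principal argument; $\arccos:[-1,1]\to[0,\pi]$. $D_c := \{(a,w)\in\mathbb{R}\times(\mathbb{C}\setminus\{0\}):\operatorname{Re}(w)<a<|w|\}$, and $\tau_c(a,w) := \frac{1}{\sqrt{|w|^2-a^2}}[|\operatorname{Arg}(w)|-\arccos(a/|w|)]$. For $\varphi\in(\pi/2,\pi)$: $C(\theta;\varphi) := \theta\cot(\theta-\varphi)$ on $[0,\varphi)$; $S(\varphi)\in(0,\varphi)$ is the unique solution of $\sin(2\theta-2\varphi) = 2\theta$; $C(\cdot;\varphi)$ is strictly increasing on $[0,S(\varphi)]$ and strictly decreasing on $[S(\varphi),\varphi)$ with maximum $M(\varphi) := \cos^2(S(\varphi)-\varphi)$, $C(0;\varphi)=0$, and $C(\theta;\varphi)\to-\infty$ as $\theta\uparrow\varphi$. $C_1^{-1}(\cdot;\varphi):[0,M(\varphi)]\to[0,S(\varphi)]$ and $C_2^{-1}(\cdot;\varphi):(-\infty,M(\varphi)]\to[S(\varphi),\varphi)$ are the inverses of the restrictions of $C(\cdot;\varphi)$ to $[0,S(\varphi)]$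 and $[S(\varphi),\varphi)$. $R_j(r;\varphi) := -C_j^{-1}(r;\varphi)/\sin(C_j^{-1}(r;\varphi)-\varphi)$ for $j=1,2$ on the respective domains. *)

theory Defs
  imports "HOL-Analysis.Analysis"
begin

definition Dc :: "(real \<times> complex) set" where
  "Dc = {(a, w). w \<noteq> 0 \<and> Re w < a \<and> a < cmod w}"

definition tau_c :: "real \<Rightarrow> complex \<Rightarrow> real" where
  "tau_c a w = (1 / sqrt ((cmod w)\<^sup>2 - a\<^sup>2)) * (\<bar>Arg w\<bar> - arccos (a / cmod w))"

definition Cfun :: "real \<Rightarrow> real \<Rightarrow> real" where
  "Cfun \<theta> \<phi> = \<theta> * cot (\<theta> - \<phi>)"

definition Sfun :: "real \<Rightarrow> real" where
  "Sfun \<phi> = (THE \<theta>. 0 < \<theta> \<and> \<theta> < \<phi> \<and> sin (2*\<theta> - 2*\<phi>) = 2*\<theta>)"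

definition Mfun :: "real \<Rightarrow> real" where
  "Mfun \<phi> = (cos (Sfun \<phi> - \<phi>))\<^sup>2"

definition C1inv :: "real \<Rightarrow> real \<Rightarrow> real" where
  "C1inv r \<phi> = (THE \<theta>. 0 \<le> \<theta> \<and> \<theta> \<le> Sfun \<phi> \<and> Cfun \<theta> \<phi> = r)"

definition C2inv :: "real \<Rightarrow> real \<Rightarrow> real" where
  "C2inv r \<phi> = (THE \<theta>. Sfun \<phi> \<le> \<theta> \<and> \<theta> < \<phi> \<and> Cfun \<theta> \<phi> = r)"

definition R1 :: "real \<Rightarrow> real \<Rightarrow> real" where
  "R1 r \<phi> = - C1inv r \<phi> / sin (C1inv r \<phi> - \<phi>)"

definition R2 :: "real \<Rightarrow> real \<Rightarrow> real" where
  "R2 r \<phi> = - C2inv r \<phi> / sin (C2inv r \<phi> - \<phi>)"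

end

theory Submission
  imports Defs
begin

(* Write r = |w|, \<phi> = |Arg w| and a = r cos \<psi> with \<psi> = arccos (a/r) in (0, \<phi>); then
   \<tau>_c(a,w) > 1 says r sin \<psi> < \<theta> for \<theta> = \<phi> - \<psi>. Since C(\<theta>;\<phi>) = -\<theta> cot \<psi>, multiplying
   by cot \<psi> turns this into C(\<theta>;\<phi>) < -a if a > 0 and into C(\<theta>;\<phi>) > -a if a < 0.
   The shape of C (increasing on [0,S], then decreasing to -\<infinity>, with maximum M) makes these
   the sets \<theta> > C\<^sub>2\<inverse>(-a) and C\<^sub>1\<inverse>(-a) < \<theta> < C\<^sub>2\<inverse>(-a). Finally, the point of the
   line Re z = a at angle \<phi> - t has modulus -t / sin (t - \<phi>), and along that line the angle
   is monotone in the modulus, which turns these conditions on \<theta> into conditions on |w|. *)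

lemma sin_diff_neg: "\<phi> - pi < t \<Longrightarrow> t < \<phi> \<Longrightarrow> sin (t - \<phi>) < 0"
  using sin_gt_zero[of "\<phi> - t"] sin_minus[of "\<phi> - t"] by simp

definition S_gap :: "real \<Rightarrow> real \<Rightarrow> real" where
  "S_gap \<phi> t = sin (2*t - 2*\<phi>) - 2*t"

lemma has_real_derivative_S_gap:
  "(S_gap \<phi> has_real_derivative - 4 * (sin (t - \<phi>))\<^sup>2) (at t)"
proof -
  have "(S_gap \<phi> has_real_derivative cos (2*t - 2*\<phi>) * 2 - 2) (at t)"
    unfolding S_gap_def by (auto intro!: derivative_eq_intros)
  moreover have "cos (2*t - 2*\<phi>) = 1 - 2 * (sin (t - \<phi>))\<^sup>2"
    using cos_double_sin[of "t - \<phi>"] by (simp add: algebra_simps)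
  ultimately show ?thesis by simp
qed

lemma S_gap_strict_decreasing:
  assumes "\<phi> - pi \<le> x" "x < y" "y \<le> \<phi>"
  shows "S_gap \<phi> y < S_gap \<phi> x"
proof (rule DERIV_neg_imp_decreasing_open[OF \<open>x < y\<close>])
  fix t assume "x < t" "t < y"
  then have "sin (t - \<phi>) \<noteq> 0" using assms sin_diff_neg[of \<phi> t] by auto
  then show "\<exists>d. (S_gap \<phi> has_real_derivative d) (at t) \<and> d < 0"
    using has_real_derivative_S_gap by (intro exI[of _ "- 4 * (sin (t - \<phi>))\<^sup>2"]) auto
qed (unfold S_gap_def, intro continuous_intros)

lemma S_gap_zero_pos:
  assumes "pi/2 < \<phi>" "\<phi> < pi"
  shows "0 < S_gap \<phi> 0"
proof -
  have "0 < sin (2*pi - 2*\<phi>)" using assms by (intro sin_gt_zero) auto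
  then show ?thesis using sin_periodic[of "- 2*\<phi>"] by (simp add: S_gap_def algebra_simps)
qed

lemma S_gap_self_neg: "0 < \<phi> \<Longrightarrow> S_gap \<phi> \<phi> < 0"
  by (simp add: S_gap_def)

lemma Sfun_bounds_and_root:
  assumes "pi/2 < \<phi>" "\<phi> < pi"
  shows "0 < Sfun \<phi>" "Sfun \<phi> < \<phi>" "S_gap \<phi> (Sfun \<phi>) = 0"
proof -
  have dec: "S_gap \<phi> y < S_gap \<phi> x" if "0 \<le> x" "x < y" "y \<le> \<phi>" for x y
    using S_gap_strict_decreasing[of \<phi> x y] that assms by auto
  have "continuous_on {0..\<phi>} (S_gap \<phi>)"
    unfolding S_gap_def by (intro continuous_intros)
  then obtain s where s: "0 \<le> s" "s \<le> \<phi>" "S_gap \<phi> s = 0"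
    using IVT2'[of "S_gap \<phi>" \<phi> 0 0] S_gap_zero_pos[OF assms] S_gap_self_neg[of \<phi>] assms
    by force
  then have s_root: "0 < s \<and> s < \<phi> \<and> sin (2 * s - 2 * \<phi>) = 2 * s"
    using S_gap_zero_pos[OF assms] S_gap_self_neg[of \<phi>] assms
    by (auto simp: S_gap_def less_le)
  have "Sfun \<phi> = s"
    unfolding Sfun_def
  proof (rule the_equality)
    fix u assume "0 < u \<and> u < \<phi> \<and> sin (2*u - 2*\<phi>) = 2*u"
    then show "u = s"
      using dec[of u s] dec[of s u] s by (cases u s rule: linorder_cases) (auto simp: S_gap_def)
  qed (fact s_root)
  with s s_root show "0 < Sfun \<phi>" "Sfun \<phi> < \<phi>" "S_gap \<phi> (Sfun \<phi>) = 0" by auto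
qed

lemma has_real_derivative_Cfun:
  assumes "sin (t - \<phi>) \<noteq> 0"
  shows "((\<lambda>u. Cfun u \<phi>) has_real_derivative S_gap \<phi> t / (2 * (sin (t - \<phi>))\<^sup>2)) (at t)"
proof -
  have "((\<lambda>u. Cfun u \<phi>) has_real_derivative cot (t - \<phi>) - t / (sin (t - \<phi>))\<^sup>2) (at t)"
    unfolding Cfun_def using assms
    by (auto intro!: derivative_eq_intros DERIV_chain2[OF DERIV_cot] simp: divide_inverse)
  moreover have "sin (2 * t - 2 * \<phi>) = 2 * sin (t - \<phi>) * cos (t - \<phi>)"
    using sin_double[of "t - \<phi>"] by (simp add: algebra_simps)
  then have "cot (t - \<phi>) - t / (sin (t - \<phi>))\<^sup>2 = S_gap \<phi> t / (2 * (sin (t - \<phi>))\<^sup>2)"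
    using assms by (simp add: S_gap_def cot_def field_simps power2_eq_square)
  ultimately show ?thesis by simp
qed

lemma continuous_on_Cfun:
  assumes "{x..y} \<subseteq> {\<phi> - pi<..<\<phi>}"
  shows "continuous_on {x..y} (\<lambda>u. Cfun u \<phi>)"
proof (rule continuous_at_imp_continuous_on, clarify)
  fix t assume "t \<in> {x..y}"
  then have "sin (t - \<phi>) \<noteq> 0" using sin_diff_neg[of \<phi> t] assms by auto
  then show "isCont (\<lambda>u. Cfun u \<phi>) t" using has_real_derivative_Cfun DERIV_isCont by blast
qed

lemma Mfun_nonneg: "0 \<le> Mfun \<phi>"
  by (simp add: Mfun_def)

lemma Cfun_zero [simp]: "Cfun 0 \<phi> = 0"
  by (simp add: Cfun_def)

lemma Cfun_right_angle: "Cfun (\<phi> - pi/2) \<phi> = 0"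
  by (simp add: Cfun_def cot_def)

lemma boundary_radius:
  assumes "\<phi> < pi" "0 < t" "t < \<phi>"
  shows "0 < - t / sin (t - \<phi>)" "- t / sin (t - \<phi>) * cos (\<phi> - t) = - Cfun t \<phi>"
proof -
  have "sin (t - \<phi>) < 0" using sin_diff_neg[of \<phi> t] assms by auto
  then show "0 < - t / sin (t - \<phi>)" "- t / sin (t - \<phi>) * cos (\<phi> - t) = - Cfun t \<phi>"
    using assms cos_minus[of "t - \<phi>"] by (auto simp: Cfun_def cot_def divide_pos_neg)
qed

lemma less_radius_iff_pos:
  assumes "0 < r" "0 < \<rho>" "r * cos x = \<rho> * cos y" "0 < r * cos x"
    and "x \<in> {0..pi}" "y \<in> {0..pi}"
  shows "r < \<rho> \<longleftrightarrow> x < y"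
proof -
  have "0 < cos y" using assms by (simp add: zero_less_mult_iff)
  then have "r < \<rho> \<longleftrightarrow> r * cos y < r * cos x" using assms(3) by simp
  also have "\<dots> \<longleftrightarrow> x < y" using cos_mono_less_eq[of y x] assms(1,5,6) by simp
  finally show ?thesis .
qed

lemma less_radius_iff_neg:
  assumes "0 < r" "0 < \<rho>" "r * cos x = \<rho> * cos y" "r * cos x < 0"
    and "x \<in> {0..pi}" "y \<in> {0..pi}"
  shows "r < \<rho> \<longleftrightarrow> y < x"
proof -
  have "cos y < 0" using assms by (simp add: mult_less_0_iff)
  then have "r < \<rho> \<longleftrightarrow> r * cos x < r * cos y" using assms(3) by simp
  also have "\<dots> \<longleftrightarrow> y < x" using cos_mono_less_eq[of x y] assms(1,5,6) by simp
  finally show ?thesis .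
qed

lemma tau_boundary_identity:
  assumes "sin \<psi> \<noteq> 0"
  shows "(\<phi> - \<psi> - r * sin \<psi>) * cos \<psi> = (- r * cos \<psi> - Cfun (\<phi> - \<psi>) \<phi>) * sin \<psi>"
  using assms by (simp add: Cfun_def cot_def field_simps)

context
  fixes \<phi> :: real
  assumes \<phi>_range: "pi/2 < \<phi>" "\<phi> < pi"
begin

lemmas Sfun_pos = Sfun_bounds_and_root(1)[OF \<phi>_range]
   and Sfun_less = Sfun_bounds_and_root(2)[OF \<phi>_range]
   and S_gap_Sfun = Sfun_bounds_and_root(3)[OF \<phi>_range]

lemma strict_mono_on_Cfun: "strict_mono_on {0..Sfun \<phi>} (\<lambda>t. Cfun t \<phi>)"
proof (rule strict_mono_onI)
  fix x y assume "x \<in> {0..Sfun \<phi>}" "y \<in> {0..Sfun \<phi>}" "x < y"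
  then show "Cfun x \<phi> < Cfun y \<phi>"
  proof (intro DERIV_pos_imp_increasing_open[OF \<open>x < y\<close>])
    fix t assume "x < t" "t < y"
    then have "sin (t - \<phi>) < 0" "0 < S_gap \<phi> t"
      using sin_diff_neg[of \<phi> t] S_gap_strict_decreasing[of \<phi> t "Sfun \<phi>"]
        Sfun_pos Sfun_less S_gap_Sfun \<open>x \<in> _\<close> \<open>y \<in> _\<close> \<phi>_range by auto
    then show "\<exists>d. ((\<lambda>u. Cfun u \<phi>) has_real_derivative d) (at t) \<and> 0 < d"
      using has_real_derivative_Cfun[of t \<phi>] by (auto intro!: divide_pos_pos)
  qed (use \<phi>_range Sfun_less in \<open>auto intro!: continuous_on_Cfun\<close>)
qed

lemma strict_antimono_on_Cfun: "strict_antimono_on {Sfun \<phi>..<\<phi>} (\<lambda>t. Cfun t \<phi>)"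
proof (rule monotone_onI)
  fix x y assume "x \<in> {Sfun \<phi>..<\<phi>}" "y \<in> {Sfun \<phi>..<\<phi>}" "x < y"
  then show "Cfun y \<phi> < Cfun x \<phi>"
  proof (intro DERIV_neg_imp_decreasing_open[OF \<open>x < y\<close>])
    fix t assume "x < t" "t < y"
    then have "sin (t - \<phi>) < 0" "S_gap \<phi> t < 0"
      using sin_diff_neg[of \<phi> t] S_gap_strict_decreasing[of \<phi> "Sfun \<phi>" t]
        Sfun_pos Sfun_less S_gap_Sfun \<open>x \<in> _\<close> \<open>y \<in> _\<close> \<phi>_range by auto
    then show "\<exists>d. ((\<lambda>u. Cfun u \<phi>) has_real_derivative d) (at t) \<and> d < 0"
      using has_real_derivative_Cfun[of t \<phi>] by (auto intro!: divide_neg_pos)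
  qed (use \<phi>_range Sfun_pos in \<open>auto intro!: continuous_on_Cfun\<close>)
qed

lemma Cfun_less_iff_left:
  "x \<in> {0..Sfun \<phi>} \<Longrightarrow> y \<in> {0..Sfun \<phi>} \<Longrightarrow> Cfun x \<phi> < Cfun y \<phi> \<longleftrightarrow> x < y"
  using strict_mono_on_less[OF strict_mono_on_Cfun] .

lemma Cfun_less_iff_right:
  assumes "x \<in> {Sfun \<phi>..<\<phi>}" "y \<in> {Sfun \<phi>..<\<phi>}"
  shows "Cfun x \<phi> < Cfun y \<phi> \<longleftrightarrow> y < x"
  using monotone_onD[OF strict_antimono_on_Cfun] assms
  by (cases x y rule: linorder_cases) (auto dest: order.asym)

lemma Cfun_Sfun: "Cfun (Sfun \<phi>) \<phi> = Mfun \<phi>"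
proof -
  let ?s = "Sfun \<phi>"
  have "sin (?s - \<phi>) \<noteq> 0"
    using sin_diff_neg[of \<phi> ?s] Sfun_pos Sfun_less \<phi>_range by auto
  moreover have "?s = sin (?s - \<phi>) * cos (?s - \<phi>)"
    using S_gap_Sfun sin_double[of "?s - \<phi>"]
    by (simp add: S_gap_def algebra_simps)
  ultimately show ?thesis
    unfolding Cfun_def cot_def Mfun_def by (simp add: field_simps power2_eq_square)
qed

lemma Sfun_less_right_angle: "Sfun \<phi> < \<phi> - pi/2"
  using Cfun_less_iff_left[of 0 "\<phi> - pi/2"] Cfun_right_angle[of \<phi>] Sfun_pos \<phi>_range
  by fastforce

lemma Cfun_le_Mfun: "t \<in> {0..<\<phi>} \<Longrightarrow> Cfun t \<phi> \<le> Mfun \<phi>"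
  using Cfun_less_iff_left[of t "Sfun \<phi>"] Cfun_less_iff_right[of "Sfun \<phi>" t] Cfun_Sfun
    Sfun_pos Sfun_less by (cases "t \<le> Sfun \<phi>") (auto simp: not_less)

lemma Cfun_unbounded_below: "\<exists>t \<in> {Sfun \<phi>..<\<phi>}. Cfun t \<phi> \<le> c"
proof -
  define b where "b = \<bar>c\<bar> + 1"
  define x where "x = 1 / (2 * b)"
  have b: "1 \<le> b" and x: "0 < x" "x \<le> 1/2"
    by (auto simp: b_def x_def field_simps)
  have sin_x: "0 < sin x" "sin x \<le> x"
    using x pi_gt3 by (auto intro!: sin_gt_zero sin_x_le_x)
  have "1/2 \<le> cos x"
    using cos_mono_le_eq[of x "pi/3"] x pi_gt3 cos_60 by auto
  then have "b \<le> cos x / sin x"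
    using frac_le[of "1/2" "cos x" x "sin x"] sin_x x by (simp add: x_def field_simps)
  moreover have "1 \<le> \<phi> - x"
    using \<phi>_range x pi_gt3 by auto
  ultimately have "b \<le> (\<phi> - x) * (cos x / sin x)"
    using mult_right_mono[of 1 "\<phi> - x" "cos x / sin x"] b by linarith
  moreover have "Cfun (\<phi> - x) \<phi> = - ((\<phi> - x) * (cos x / sin x))"
    by (simp add: Cfun_def cot_def)
  ultimately have "Cfun (\<phi> - x) \<phi> \<le> c"
    unfolding b_def by linarith
  moreover have "\<phi> - x \<in> {Sfun \<phi>..<\<phi>}"
    using Sfun_less_right_angle x pi_gt3 by auto
  ultimately show ?thesis by blast
qed

lemma C1inv_Cfun: "t \<in> {0..Sfun \<phi>} \<Longrightarrow> C1inv (Cfun t \<phi>) \<phi> = t"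
  unfolding C1inv_def
  by (rule the_equality) (auto dest: strict_mono_on_eqD[OF strict_mono_on_Cfun])

lemma C2inv_Cfun: "t \<in> {Sfun \<phi>..<\<phi>} \<Longrightarrow> C2inv (Cfun t \<phi>) \<phi> = t"
  unfolding C2inv_def
  using strict_antimono_on_Cfun[unfolded strict_antimono_iff_antimono]
  by (intro the_equality) (auto dest: inj_onD)

lemma Cfun_C1inv:
  assumes "0 \<le> c" "c \<le> Mfun \<phi>"
  shows "C1inv c \<phi> \<in> {0..Sfun \<phi>}" "Cfun (C1inv c \<phi>) \<phi> = c"
proof -
  have "continuous_on {0..Sfun \<phi>} (\<lambda>t. Cfun t \<phi>)"
    using \<phi>_range Sfun_less by (intro continuous_on_Cfun) auto
  then obtain t where "t \<in> {0..Sfun \<phi>}" "Cfun t \<phi> = c"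
    using IVT'[of "\<lambda>t. Cfun t \<phi>" 0 c "Sfun \<phi>"] assms Cfun_Sfun Sfun_pos by auto
  then show "C1inv c \<phi> \<in> {0..Sfun \<phi>}" "Cfun (C1inv c \<phi>) \<phi> = c"
    using C1inv_Cfun by auto
qed

lemma Cfun_C2inv:
  assumes "c \<le> Mfun \<phi>"
  shows "C2inv c \<phi> \<in> {Sfun \<phi>..<\<phi>}" "Cfun (C2inv c \<phi>) \<phi> = c"
proof -
  obtain u where u: "u \<in> {Sfun \<phi>..<\<phi>}" "Cfun u \<phi> \<le> c"
    using Cfun_unbounded_below by blast
  have "continuous_on {Sfun \<phi>..u} (\<lambda>t. Cfun t \<phi>)"
    using \<phi>_range Sfun_pos u by (intro continuous_on_Cfun) auto
  then obtain t where "t \<in> {Sfun \<phi>..u}" "Cfun t \<phi> = c"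
    using IVT2'[of "\<lambda>t. Cfun t \<phi>" u c "Sfun \<phi>"] assms u Cfun_Sfun by auto
  then show "C2inv c \<phi> \<in> {Sfun \<phi>..<\<phi>}" "Cfun (C2inv c \<phi>) \<phi> = c"
    using C2inv_Cfun u by auto
qed

lemma Cfun_less_neg_level_iff:
  assumes "c < 0" "\<theta> \<in> {0..<\<phi>}"
  shows "Cfun \<theta> \<phi> < c \<longleftrightarrow> C2inv c \<phi> < \<theta>"
proof (cases "\<theta> \<le> Sfun \<phi>")
  case True
  then have "0 \<le> Cfun \<theta> \<phi>"
    using Cfun_less_iff_left[of \<theta> 0] assms Sfun_pos by (auto simp: not_less[symmetric])
  then show ?thesis
    using Cfun_C2inv(1)[of c] True assms Mfun_nonneg[of \<phi>] by auto
next
  case False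
  then show ?thesis
    using Cfun_less_iff_right[of \<theta> "C2inv c \<phi>"] Cfun_C2inv[of c] assms Mfun_nonneg[of \<phi>]
    by auto
qed

lemma Cfun_greater_pos_level_iff:
  assumes "0 < c" "c < Mfun \<phi>" "\<theta> \<in> {0..<\<phi>}"
  shows "c < Cfun \<theta> \<phi> \<longleftrightarrow> C1inv c \<phi> < \<theta> \<and> \<theta> < C2inv c \<phi>"
proof -
  have t1: "C1inv c \<phi> \<in> {0..Sfun \<phi>}" "Cfun (C1inv c \<phi>) \<phi> = c"
    using Cfun_C1inv assms by auto
  have t2: "C2inv c \<phi> \<in> {Sfun \<phi>..<\<phi>}" "Cfun (C2inv c \<phi>) \<phi> = c"
    using Cfun_C2inv assms by auto
  moreover have "C2inv c \<phi> \<noteq> Sfun \<phi>"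
    using t2 Cfun_Sfun assms by auto
  ultimately have "Sfun \<phi> < C2inv c \<phi>" by auto
  then show ?thesis
    using Cfun_less_iff_left[of "C1inv c \<phi>" \<theta>] Cfun_less_iff_right[of "C2inv c \<phi>" \<theta>] t1 t2 assms
    by (cases "\<theta> \<le> Sfun \<phi>") auto
qed

lemma polar_tau_gt_one_iff_pos:
  assumes r: "0 < r" and \<psi>: "0 < \<psi>" "\<psi> < \<phi>" and a: "a = r * cos \<psi>" "0 < a"
  shows "r * sin \<psi> < \<phi> - \<psi> \<longleftrightarrow> r < R2 (-a) \<phi>"
proof -
  define t where "t = C2inv (-a) \<phi>"
  define \<rho> where "\<rho> = - t / sin (t - \<phi>)"
  have t: "t \<in> {Sfun \<phi>..<\<phi>}" "Cfun t \<phi> = -a"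
    using Cfun_C2inv[of "-a"] Mfun_nonneg[of \<phi>] a by (auto simp: t_def)
  then have \<rho>: "0 < \<rho>" "\<rho> * cos (\<phi> - t) = a"
    using boundary_radius[of \<phi> t] Sfun_pos \<phi>_range by (auto simp: \<rho>_def)
  have sin: "0 < sin \<psi>" using \<psi> \<phi>_range by (intro sin_gt_zero) auto
  have cos: "0 < cos \<psi>" using a r by (simp add: zero_less_mult_iff)
  have "r * sin \<psi> < \<phi> - \<psi> \<longleftrightarrow> 0 < (\<phi> - \<psi> - r * sin \<psi>) * cos \<psi>"
    using cos by (simp add: zero_less_mult_iff)
  also have "\<dots> \<longleftrightarrow> 0 < (- a - Cfun (\<phi> - \<psi>) \<phi>) * sin \<psi>"
    using tau_boundary_identity[of \<psi> \<phi> r] sin a by simp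
  also have "\<dots> \<longleftrightarrow> Cfun (\<phi> - \<psi>) \<phi> < -a"
    using sin by (simp add: zero_less_mult_iff)
  also have "\<dots> \<longleftrightarrow> t < \<phi> - \<psi>"
    using Cfun_less_neg_level_iff[of "-a" "\<phi> - \<psi>"] a \<psi> by (simp add: t_def)
  also have "\<dots> \<longleftrightarrow> r < \<rho>"
    using less_radius_iff_pos[of r \<rho> \<psi> "\<phi> - t"] \<rho> t r a \<psi> \<phi>_range Sfun_pos by auto
  finally show ?thesis by (simp add: R2_def \<rho>_def t_def)
qed

lemma polar_tau_gt_one_iff_zero:
  assumes "0 < r" "0 < \<psi>" "\<psi> < \<phi>" "r * cos \<psi> = 0"
  shows "r * sin \<psi> < \<phi> - \<psi> \<longleftrightarrow> r < R2 0 \<phi>"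
proof -
  have \<psi>_eq: "\<psi> = pi/2" using arccos_cos[of \<psi>] assms \<phi>_range by auto
  have "C2inv 0 \<phi> = \<phi> - pi/2"
    using C2inv_Cfun[of "\<phi> - pi/2"] Cfun_right_angle[of \<phi>] Sfun_less_right_angle \<phi>_range by auto
  then show ?thesis unfolding R2_def \<psi>_eq by simp
qed

lemma polar_tau_gt_one_iff_neg:
  assumes r: "0 < r" and \<psi>: "0 < \<psi>" "\<psi> < \<phi>" and a: "a = r * cos \<psi>" "a < 0"
  shows "r * sin \<psi> < \<phi> - \<psi> \<longleftrightarrow> - Mfun \<phi> < a \<and> R1 (-a) \<phi> < r \<and> r < R2 (-a) \<phi>"
proof -
  have sin: "0 < sin \<psi>" using \<psi> \<phi>_range by (intro sin_gt_zero) auto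
  have cos: "cos \<psi> < 0" using a r by (simp add: mult_less_0_iff)
  have "r * sin \<psi> < \<phi> - \<psi> \<longleftrightarrow> (\<phi> - \<psi> - r * sin \<psi>) * cos \<psi> < 0"
    using cos by (simp add: mult_less_0_iff)
  also have "\<dots> \<longleftrightarrow> (- a - Cfun (\<phi> - \<psi>) \<phi>) * sin \<psi> < 0"
    using tau_boundary_identity[of \<psi> \<phi> r] sin a by simp
  also have "\<dots> \<longleftrightarrow> -a < Cfun (\<phi> - \<psi>) \<phi>"
    using sin by (simp add: mult_less_0_iff)
  finally have level: "r * sin \<psi> < \<phi> - \<psi> \<longleftrightarrow> -a < Cfun (\<phi> - \<psi>) \<phi>" .
  show ?thesis
  proof (cases "-a < Mfun \<phi>")
    case False
    then show ?thesis using level Cfun_le_Mfun[of "\<phi> - \<psi>"] \<psi> by auto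
  next
    case True
    define t1 t2 where "t1 = C1inv (-a) \<phi>" and "t2 = C2inv (-a) \<phi>"
    define \<rho>1 \<rho>2 where "\<rho>1 = - t1 / sin (t1 - \<phi>)" and "\<rho>2 = - t2 / sin (t2 - \<phi>)"
    have t1: "t1 \<in> {0..Sfun \<phi>}" "Cfun t1 \<phi> = -a"
      using Cfun_C1inv[of "-a"] True a by (auto simp: t1_def)
    moreover have "t1 \<noteq> 0" using t1 a by auto
    ultimately have \<rho>1: "0 < \<rho>1" "\<rho>1 * cos (\<phi> - t1) = a"
      using boundary_radius[of \<phi> t1] Sfun_less \<phi>_range by (auto simp: \<rho>1_def)
    have t2: "t2 \<in> {Sfun \<phi>..<\<phi>}" "Cfun t2 \<phi> = -a"
      using Cfun_C2inv[of "-a"] True by (auto simp: t2_def)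
    then have \<rho>2: "0 < \<rho>2" "\<rho>2 * cos (\<phi> - t2) = a"
      using boundary_radius[of \<phi> t2] Sfun_pos \<phi>_range by (auto simp: \<rho>2_def)
    have "r * sin \<psi> < \<phi> - \<psi> \<longleftrightarrow> t1 < \<phi> - \<psi> \<and> \<phi> - \<psi> < t2"
      using level Cfun_greater_pos_level_iff[of "-a" "\<phi> - \<psi>"] True a \<psi> by (simp add: t1_def t2_def)
    also have "\<dots> \<longleftrightarrow> \<rho>1 < r \<and> r < \<rho>2"
      using less_radius_iff_neg[of \<rho>1 r "\<phi> - t1" \<psi>] less_radius_iff_neg[of r \<rho>2 \<psi> "\<phi> - t2"]
        \<rho>1 \<rho>2 t1 t2 r a \<psi> \<phi>_range Sfun_less by auto
    finally show ?thesis
      using True by (auto simp: R1_def R2_def \<rho>1_def \<rho>2_def t1_def t2_def)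
  qed
qed

lemma polar_tau_gt_one_iff:
  assumes "0 < r" "0 < \<psi>" "\<psi> < \<phi>" "a = r * cos \<psi>"
  shows "r * sin \<psi> < \<phi> - \<psi> \<longleftrightarrow>
           (a \<ge> 0 \<and> r < R2 (-a) \<phi>) \<or>
           (- Mfun \<phi> < a \<and> a < 0 \<and> R1 (-a) \<phi> < r \<and> r < R2 (-a) \<phi>)"
  using polar_tau_gt_one_iff_pos[OF assms] polar_tau_gt_one_iff_zero[of r \<psi>]
    polar_tau_gt_one_iff_neg[OF assms] assms
  by (cases a "0::real" rule: linorder_cases) auto

end

lemma tau_c_polar:
  assumes "w \<noteq> 0" "0 \<le> \<psi>" "\<psi> \<le> pi"
  shows "tau_c (cmod w * cos \<psi>) w = (\<bar>Arg w\<bar> - \<psi>) / (cmod w * sin \<psi>)"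
proof -
  have "(cmod w)\<^sup>2 - (cmod w * cos \<psi>)\<^sup>2 = (cmod w * sin \<psi>)\<^sup>2"
    by (simp add: sin_squared_eq algebra_simps)
  moreover have "0 \<le> sin \<psi>" using assms by (intro sin_ge_zero)
  ultimately have "sqrt ((cmod w)\<^sup>2 - (cmod w * cos \<psi>)\<^sup>2) = cmod w * sin \<psi>" by simp
  then show ?thesis using assms by (simp add: tau_c_def arccos_cos)
qed

lemma Dc_arccos:
  assumes "(a, w) \<in> Dc"
  defines "\<psi> \<equiv> arccos (a / cmod w)"
  shows "0 < \<psi>" "\<psi> < \<bar>Arg w\<bar>" "a = cmod w * cos \<psi>"
proof -
  have w: "w \<noteq> 0" "Re w < a" "a < cmod w" using assms by (auto simp: Dc_def)
  have "cos \<bar>Arg w\<bar> = Re w / cmod w" using cos_Arg[OF w(1)] by (simp add: abs_if)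
  then have bounds: "cos \<bar>Arg w\<bar> < a / cmod w" "a / cmod w < 1"
    using w by (auto simp: divide_strict_right_mono)
  then have "-1 < a / cmod w" using cos_ge_minus_one[of "\<bar>Arg w\<bar>"] by linarith
  then have "0 < \<psi>" "\<psi> < pi" "cos \<psi> = a / cmod w"
    using arccos_lt_bounded[of "a / cmod w"] bounds by (auto simp: \<psi>_def)
  then show "0 < \<psi>" "\<psi> < \<bar>Arg w\<bar>" "a = cmod w * cos \<psi>"
    using cos_mono_less_eq[of "\<bar>Arg w\<bar>" \<psi>] Arg_bounded[of w] bounds w by auto
qed

theorem mainTheorem15:
  fixes a :: real and w :: complex
  assumes "Im w \<noteq> 0"
    and "(a, w) \<in> Dc"
    and "pi / 2 < \<bar>Arg w\<bar>" and "\<bar>Arg w\<bar> < pi"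
  shows "tau_c a w > 1 \<longleftrightarrow>
           ((a \<ge> 0 \<and> cmod w < R2 (-a) \<bar>Arg w\<bar>) \<or>
            (- Mfun \<bar>Arg w\<bar> < a \<and> a < 0 \<and>
             R1 (-a) \<bar>Arg w\<bar> < cmod w \<and> cmod w < R2 (-a) \<bar>Arg w\<bar>))"
proof -
  define \<phi> r \<psi> where "\<phi> = \<bar>Arg w\<bar>" and "r = cmod w" and "\<psi> = arccos (a / cmod w)"
  have \<psi>: "0 < \<psi>" "\<psi> < \<phi>" "a = r * cos \<psi>"
    using Dc_arccos[OF assms(2)] by (simp_all add: \<phi>_def r_def \<psi>_def)
  have "0 < r" using assms(2) by (auto simp: Dc_def r_def)
  have "0 < sin \<psi>" using \<psi> assms(4) by (intro sin_gt_zero) (auto simp: \<phi>_def)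
  then have "0 < r * sin \<psi>" using \<open>0 < r\<close> by simp
  moreover have "tau_c a w = (\<phi> - \<psi>) / (r * sin \<psi>)"
    using tau_c_polar[of w \<psi>] \<psi> assms(4) \<open>0 < r\<close> by (simp add: \<phi>_def r_def)
  ultimately have "tau_c a w > 1 \<longleftrightarrow> r * sin \<psi> < \<phi> - \<psi>" by simp
  also have "\<dots> \<longleftrightarrow> (a \<ge> 0 \<and> r < R2 (-a) \<phi>) \<or>
                    (- Mfun \<phi> < a \<and> a < 0 \<and> R1 (-a) \<phi> < r \<and> r < R2 (-a) \<phi>)"
    using polar_tau_gt_one_iff[OF _ _ \<open>0 < r\<close> \<psi>] assms(3,4) by (simp add: \<phi>_def)
  finally show ?thesis by (simp add: \<phi>_def r_def)
qed

end
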